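(* Let $\pi$ be a permutation and suppose $\pi$ contains an occurrence of the pattern $j_3$ whose underlying classical pattern is $43251$, with shaded boxes $\{(1,4),(1,5),(2,4),(2,5)\}$ and marked region $\{(2,3)\}$. Then the entries of this occurrence playing roles $1,2,3,4$ form, in the same roles, an occurrence in $S(\pi)$ of the mesh pattern $W_2=(3241,\{(1,4)\})$.
   Context: Permutations are in one-line notation. For a sequence $w$ of distinct integers, the stack-sort $S(w)$ is defined by $S(\varepsilon)=\varepsilon$ and $S(\alpha m\beta)=S(\alpha)S(\beta)m$ where $m$ is the largest entry of $w$. An occurrence of a classical pattern $p$ of length $k$ in a permutation $\sigma$ of length $n$ is a set of entries at positions $i_1<\dots<i_k$ whose values are order-isomorphic to $p$; the entry corresponding to letter $r$ of $p$ plays role $r$. With values $v_1<\dots<v_k$ of the occurrence and $i_0=v_0=0$, $i_{k+1}=v_{k+1}=n+1$, the box $(a,b)$ ($0\le a,b\le k$) is the set of entries $\sigma(x)$ with $i_a<x<i_{a+1}$, $v_b<\sigma(x)<v_{b+1}$. A pattern with shaded boxes $R$ and marked region $M$ occurs when an occurrence of the underlying classical pattern has every box in $R$ empty and the union of the boxes in $M$ contains at least one entry; a mesh pattern $(p,R)$ has no marked region. *)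

theory Defs
  imports Main
begin

text \<open>Permutations are nat lists in one-line notation; a permutation of length n
  is a list whose set of entries is {1..n}. Positions are 1-based: entry at position x
  of sigma is sigma ! (x - 1).\<close>

definition is_perm :: "nat list \<Rightarrow> bool" where
  "is_perm w \<longleftrightarrow> distinct w \<and> set w = {1..length w}"

lemma takeWhile_len_less: "x \<in> set w \<Longrightarrow> \<not> P x \<Longrightarrow> length (takeWhile P w) < length w"
  by (induction w) auto

lemma Max_in_list: "w \<noteq> [] \<Longrightarrow> Max (set w) \<in> set w"
  by simp

function stack_sort :: "nat list \<Rightarrow> nat list" where
  "stack_sort w =
     (if w = [] then []
      else (let m = Max (set w);
                \<alpha> = takeWhile (\<lambda>x. x \<noteq> m) w;
                \<beta> = tl (dropWhile (\<lambda>x. x \<noteq> m) w)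
            in stack_sort \<alpha> @ stack_sort \<beta> @ [m]))"
  by pat_completeness auto
termination
proof (relation "measure length")
  fix w :: "nat list" and m \<alpha>
  assume "w \<noteq> []" "m = Max (set w)" "\<alpha> = takeWhile (\<lambda>x. x \<noteq> m) w"
  then show "(\<alpha>, w) \<in> measure length"
    using takeWhile_len_less[of m w "\<lambda>x. x \<noteq> m"] by simp
next
  fix w :: "nat list" and m \<beta>
  assume "w \<noteq> []" "m = Max (set w)" "\<beta> = tl (dropWhile (\<lambda>x. x \<noteq> m) w)"
  then show "(\<beta>, w) \<in> measure length"
    using length_dropWhile_le[of "\<lambda>x. x \<noteq> m" w] by (cases w) auto
qed simp

definition occ :: "nat list \<Rightarrow> nat list \<Rightarrow> nat list \<Rightarrow> bool" where
  "occ \<sigma> p ps \<longleftrightarrow> length ps = length p \<and> sorted_wrt (<) ps \<and>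
     (\<forall>i\<in>set ps. 1 \<le> i \<and> i \<le> length \<sigma>) \<and>
     (\<forall>a<length p. \<forall>b<length p.
        (\<sigma> ! (ps ! a - 1) < \<sigma> ! (ps ! b - 1)) \<longleftrightarrow> (p ! a < p ! b))"

definition box :: "nat list \<Rightarrow> nat list \<Rightarrow> nat \<times> nat \<Rightarrow> nat set" where
  "box \<sigma> ps ab =
     (let n = length \<sigma>;
          ip = 0 # ps @ [n + 1];
          vp = 0 # sort (map (\<lambda>i. \<sigma> ! (i - 1)) ps) @ [n + 1];
          a = fst ab; b = snd ab
      in {x. ip ! a < x \<and> x < ip ! (a + 1) \<and>
             vp ! b < \<sigma> ! (x - 1) \<and> \<sigma> ! (x - 1) < vp ! (b + 1)})"

definition marked_occ ::
  "nat list \<Rightarrow> nat list \<Rightarrow> (nat \<times> nat) set \<Rightarrow> (nat \<times> nat) set \<Rightarrow> nat list \<Rightarrow> bool" where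
  "marked_occ \<sigma> p R M ps \<longleftrightarrow> occ \<sigma> p ps \<and> (\<forall>ab\<in>R. box \<sigma> ps ab = {}) \<and>
     (\<Union>ab\<in>M. box \<sigma> ps ab) \<noteq> {}"

definition mesh_occ :: "nat list \<Rightarrow> nat list \<Rightarrow> (nat \<times> nat) set \<Rightarrow> nat list \<Rightarrow> bool" where
  "mesh_occ \<sigma> p R ps \<longleftrightarrow> occ \<sigma> p ps \<and> (\<forall>ab\<in>R. box \<sigma> ps ab = {})"

end

theory Submission
  imports Defs "HOL-Library.Multiset" "HOL-Library.Sublist"
begin

text \<open>Stack-sorting puts the maximum m of a word last and sorts the two sides of m
  recursively. Hence an entry u that lies before v in \<pi> still lies before v in S(\<pi>) unless
  u > v and every entry between them is smaller than u. For an occurrence d c b e a of 43251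
  (values a < b < c < d < e) the shaded boxes make every entry strictly between d and b smaller
  than d, and the marked box provides an entry larger than c between c and b. So in S(\<pi>) the
  entry c stays before b, b overtakes d, and e keeps d before a. An entry y > d sitting between
  c and b in S(\<pi>) must come from the left of c in \<pi>. To stay ahead of b it needs a larger
  entry between itself and b; the entries from c up to b are smaller than d, so that entry lies
  before c and would keep y ahead of c as well.\<close>

declare stack_sort.simps [simp del]

lemma subseq_pair_set: "subseq [u, v] xs \<Longrightarrow> u \<in> set xs \<and> v \<in> set xs"
  by (induction xs) (auto simp: subseq_singleton_left split: if_splits)

lemma subseq_pair_append:
  "subseq [u, v] (xs @ ys) \<longleftrightarrow> subseq [u, v] xs \<or> subseq [u, v] ys \<or> (u \<in> set xs \<and> v \<in> set ys)"
  by (induction xs) (auto simp: subseq_singleton_left dest: subseq_pair_set)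

lemma subseq_pair_iff_nth:
  "subseq [u, v] xs \<longleftrightarrow> (\<exists>p q. p < q \<and> q < length xs \<and> xs ! p = u \<and> xs ! q = v)"
proof
  show "subseq [u, v] xs \<Longrightarrow> \<exists>p q. p < q \<and> q < length xs \<and> xs ! p = u \<and> xs ! q = v"
  proof (induction xs)
    case (Cons x xs)
    show ?case
    proof (cases "u = x \<and> v \<in> set xs")
      case True
      then obtain q where "q < length xs" "xs ! q = v" by (auto simp: in_set_conv_nth)
      with True show ?thesis by (intro exI[of _ 0] exI[of _ "Suc q"]) auto
    next
      case False
      with Cons obtain p q where "p < q" "q < length xs" "xs ! p = u" "xs ! q = v"
        by (auto simp: subseq_singleton_left split: if_splits)
      then show ?thesis by (intro exI[of _ "Suc p"] exI[of _ "Suc q"]) auto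
    qed
  qed simp
next
  assume "\<exists>p q. p < q \<and> q < length xs \<and> xs ! p = u \<and> xs ! q = v"
  then obtain p q where pq: "p < q" "q < length xs" "xs ! p = u" "xs ! q = v" by blast
  have "u \<in> set (take q xs)" using pq by (auto simp: in_set_conv_nth intro!: exI[of _ p])
  moreover have "v \<in> set (drop q xs)" using pq by (auto simp: in_set_conv_nth intro!: exI[of _ 0])
  ultimately show "subseq [u, v] xs"
    using subseq_pair_append[of u v "take q xs" "drop q xs"] by simp
qed

lemma subseq_nth_nth_iff:
  assumes "distinct xs" "p < length xs" "q < length xs"
  shows "subseq [xs ! p, xs ! q] xs \<longleftrightarrow> p < q"
  using assms by (auto simp: subseq_pair_iff_nth nth_eq_iff_index_eq)

lemma subseq_pair_swap:
  assumes "distinct xs" "u \<in> set xs" "v \<in> set xs" "u \<noteq> v"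
  shows "subseq [v, u] xs \<longleftrightarrow> \<not> subseq [u, v] xs"
proof -
  obtain p q where "p < length xs" "q < length xs" "xs ! p = u" "xs ! q = v"
    using assms(2,3) by (auto simp: in_set_conv_nth)
  with assms show ?thesis by (metis linorder_neqE_nat not_less_iff_gr_or_eq subseq_nth_nth_iff)
qed

lemma stack_sort_Nil [simp]: "stack_sort [] = []"
  by (simp add: stack_sort.simps)

lemma stack_sort_append_Max:
  assumes "m \<notin> set \<alpha>" "Max (set (\<alpha> @ m # \<beta>)) = m"
  shows "stack_sort (\<alpha> @ m # \<beta>) = stack_sort \<alpha> @ stack_sort \<beta> @ [m]"
proof -
  have "takeWhile (\<lambda>x. x \<noteq> m) (\<alpha> @ m # \<beta>) = \<alpha>" "tl (dropWhile (\<lambda>x. x \<noteq> m) (\<alpha> @ m # \<beta>)) = \<beta>"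
    using assms(1) by (simp_all add: takeWhile_append dropWhile_append)
  moreover have "Max (insert m (set \<alpha> \<union> set \<beta>)) = m" using assms(2) by simp
  ultimately show ?thesis
    by (subst stack_sort.simps) (simp add: Let_def)
qed

lemma stack_sort_induct [case_names Nil Max]:
  assumes "P []"
    and "\<And>\<alpha> m \<beta>. m \<notin> set \<alpha> \<Longrightarrow> Max (set (\<alpha> @ m # \<beta>)) = m \<Longrightarrow> P \<alpha> \<Longrightarrow> P \<beta> \<Longrightarrow> P (\<alpha> @ m # \<beta>)"
  shows "P w"
proof (induction w rule: length_induct)
  case (1 w)
  show ?case
  proof (cases "w = []")
    case False
    then have "Max (set w) \<in> set w" by simp
    then obtain \<alpha> \<beta> where w: "w = \<alpha> @ Max (set w) # \<beta>" and "Max (set w) \<notin> set \<alpha>"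
      by (meson split_list_first)
    moreover have "length \<alpha> < length w" "length \<beta> < length w"
      using arg_cong[OF w, of length] by simp_all
    then have "P \<alpha>" "P \<beta>" using 1 by blast+
    ultimately show ?thesis using assms(2) by metis
  qed (simp add: assms(1))
qed

lemma mset_stack_sort [simp]: "mset (stack_sort w) = mset w"
  by (induction w rule: stack_sort_induct) (simp_all add: stack_sort_append_Max)

lemma set_stack_sort [simp]: "set (stack_sort w) = set w"
  by (metis mset_stack_sort set_mset_mset)

lemma distinct_stack_sort [simp]: "distinct (stack_sort w) \<longleftrightarrow> distinct w"
  by (rule mset_eq_imp_distinct_iff[OF mset_stack_sort])

lemma subseq_stack_sort_iff:
  assumes "distinct w" "w = xs @ u # ys @ v # zs"
  shows "subseq [u, v] (stack_sort w) \<longleftrightarrow> u < v \<or> (\<exists>y\<in>set ys. u < y)"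
  using assms
proof (induction w arbitrary: xs ys zs rule: stack_sort_induct)
  case (Max \<alpha> m \<beta>)
  let ?w = "xs @ u # ys @ v # zs"
  have S: "stack_sort (\<alpha> @ m # \<beta>) = stack_sort \<alpha> @ stack_sort \<beta> @ [m]"
    using Max.hyps(1,2) by (rule stack_sort_append_Max)
  have dist: "distinct ?w" using Max.prems by simp
  have "m \<notin> set \<alpha>" "m \<notin> set \<beta>" using Max.prems(1) by simp_all
  then have split: "\<alpha> = \<alpha>' \<and> \<beta> = \<beta>'" if "?w = \<alpha>' @ m # \<beta>'" for \<alpha>' \<beta>'
    using Max.prems(2) that by (metis append_Cons_eq_iff)
  have le_m: "z \<le> m" if "z \<in> set ?w" for z
    using Max.hyps(2) Max.prems(2) that by (metis Max_ge finite_set)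
  have "m \<in> set ?w" using Max.prems(2) by (metis in_set_conv_decomp)
  then consider (xs) x1 x2 where "xs = x1 @ m # x2" | (u) "m = u"
    | (ys) y1 y2 where "ys = y1 @ m # y2" | (v) "m = v" | (zs) z1 z2 where "zs = z1 @ m # z2"
    by (auto simp: in_set_conv_decomp)
  then show ?case
  proof cases
    case xs
    with split have \<alpha>: "\<alpha> = x1" and \<beta>: "\<beta> = x2 @ u # ys @ v # zs" by simp_all
    have "distinct \<beta>" using Max.prems(1) by simp
    then have IH: "subseq [u, v] (stack_sort \<beta>) \<longleftrightarrow> u < v \<or> (\<exists>y\<in>set ys. u < y)"
      using \<beta> by (rule Max.IH(2))
    have "u \<notin> set \<alpha>" "u \<noteq> m" "v \<noteq> m" using dist xs \<alpha> by auto
    then show ?thesis unfolding S using IH by (auto simp: subseq_pair_append dest: subseq_pair_set)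
  next
    case zs
    with split have \<alpha>: "\<alpha> = xs @ u # ys @ v # z1" and \<beta>: "\<beta> = z2" by simp_all
    have "distinct \<alpha>" using Max.prems(1) by simp
    then have IH: "subseq [u, v] (stack_sort \<alpha>) \<longleftrightarrow> u < v \<or> (\<exists>y\<in>set ys. u < y)"
      using \<alpha> by (rule Max.IH(1))
    have "u \<notin> set \<beta>" "v \<notin> set \<beta>" "u \<noteq> m" "v \<noteq> m" using dist zs \<beta> by auto
    then show ?thesis unfolding S using IH by (auto simp: subseq_pair_append dest: subseq_pair_set)
  next
    case u
    have "u \<notin> set \<alpha>" "u \<notin> set \<beta>" using Max.prems(1) u by auto
    moreover have "v \<le> u" "\<forall>y\<in>set ys. y \<le> u" using le_m u by auto
    moreover have "v \<noteq> u" using dist by auto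
    ultimately show ?thesis unfolding S by (auto simp: subseq_pair_append dest: subseq_pair_set)
  next
    case v
    with split have "\<alpha> = xs @ u # ys" by simp
    moreover have "u < v" using le_m[of u] dist v by auto
    ultimately show ?thesis unfolding S using v by (simp add: subseq_pair_append)
  next
    case ys
    with split have "\<alpha> = xs @ u # y1" "\<beta> = y2 @ v # zs" by simp_all
    moreover have "u < m" using le_m[of u] dist ys by auto
    ultimately show ?thesis unfolding S using ys by (auto simp: subseq_pair_append)
  qed
qed simp

lemma subseq_stack_sort_nth_iff:
  assumes "distinct w" "i < j" "j < length w"
  shows "subseq [w ! i, w ! j] (stack_sort w) \<longleftrightarrow>
    w ! i < w ! j \<or> (\<exists>k. i < k \<and> k < j \<and> w ! i < w ! k)"
proof -
  define ys where "ys = drop (Suc i) (take j w)"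
  have "i < length (take j w)" using assms by simp
  from id_take_nth_drop[OF this] have prefix: "take j w = take i w @ w ! i # ys"
    using assms by (simp add: ys_def)
  have "w = take j w @ w ! j # drop (Suc j) w" by (rule id_take_nth_drop[OF assms(3)])
  also have "\<dots> = take i w @ w ! i # ys @ w ! j # drop (Suc j) w" unfolding prefix by simp
  finally have decomp: "w = take i w @ w ! i # ys @ w ! j # drop (Suc j) w" .
  have len: "length ys = j - Suc i" and nth: "\<And>t. t < length ys \<Longrightarrow> ys ! t = w ! (Suc i + t)"
    using assms by (simp_all add: ys_def)
  have "(\<exists>y\<in>set ys. w ! i < y) \<longleftrightarrow> (\<exists>k. i < k \<and> k < j \<and> w ! i < w ! k)"
  proof
    assume "\<exists>y\<in>set ys. w ! i < y"
    then obtain t where "t < length ys" "w ! i < ys ! t" by (auto simp: in_set_conv_nth)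
    then show "\<exists>k. i < k \<and> k < j \<and> w ! i < w ! k"
      using len nth by (intro exI[of _ "Suc i + t"]) auto
  next
    assume "\<exists>k. i < k \<and> k < j \<and> w ! i < w ! k"
    then obtain k where "i < k" "k < j" "w ! i < w ! k" by blast
    then have "k - Suc i < length ys" "ys ! (k - Suc i) = w ! k" using len nth by auto
    with \<open>w ! i < w ! k\<close> show "\<exists>y\<in>set ys. w ! i < y" by (metis nth_mem)
  qed
  with decomp show ?thesis using subseq_stack_sort_iff[OF assms(1)] by blast
qed

lemma occ_43251_positions:
  assumes "occ \<sigma> [4, 3, 2, 5, 1] ps"
  obtains i0 i1 i2 i3 i4 where "ps = [Suc i0, Suc i1, Suc i2, Suc i3, Suc i4]"
    "i0 < i1" "i1 < i2" "i2 < i3" "i3 < i4" "i4 < length \<sigma>"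
    "\<sigma> ! i4 < \<sigma> ! i2" "\<sigma> ! i2 < \<sigma> ! i1" "\<sigma> ! i1 < \<sigma> ! i0" "\<sigma> ! i0 < \<sigma> ! i3"
proof -
  have "length ps = 5" using assms unfolding occ_def by simp
  then obtain p0 p1 p2 p3 p4 where ps: "ps = [p0, p1, p2, p3, p4]"
    by (auto simp: numeral_eq_Suc length_Suc_conv)
  have "0 < p0" "p0 < p1" "p1 < p2" "p2 < p3" "p3 < p4" "p4 \<le> length \<sigma>"
    using assms unfolding occ_def ps by auto
  moreover have "\<sigma> ! (p4 - 1) < \<sigma> ! (p2 - 1)" "\<sigma> ! (p2 - 1) < \<sigma> ! (p1 - 1)"
    "\<sigma> ! (p1 - 1) < \<sigma> ! (p0 - 1)" "\<sigma> ! (p0 - 1) < \<sigma> ! (p3 - 1)"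
    using assms unfolding occ_def ps by (auto simp: All_less_Suc)
  ultimately show ?thesis
    by (intro that[of "p0 - 1" "p1 - 1" "p2 - 1" "p3 - 1" "p4 - 1"]) (simp_all add: ps, linarith+)
qed

lemma j3_occurrence_positions:
  assumes perm: "is_perm \<pi>"
    and j3: "marked_occ \<pi> [4, 3, 2, 5, 1] {(1, 4), (1, 5), (2, 4), (2, 5)} {(2, 3)} ps"
  obtains i0 i1 i2 i3 i4 k where "ps = [Suc i0, Suc i1, Suc i2, Suc i3, Suc i4]"
    "i0 < i1" "i1 < i2" "i2 < i3" "i3 < i4" "i4 < length \<pi>"
    "\<pi> ! i4 < \<pi> ! i2" "\<pi> ! i2 < \<pi> ! i1" "\<pi> ! i1 < \<pi> ! i0" "\<pi> ! i0 < \<pi> ! i3"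
    "\<And>j. i0 < j \<Longrightarrow> j < i2 \<Longrightarrow> \<pi> ! j < \<pi> ! i0"
    "i1 < k" "k < i2" "\<pi> ! i1 < \<pi> ! k"
proof -
  from j3 have occ: "occ \<pi> [4, 3, 2, 5, 1] ps"
    and shaded: "\<forall>ab\<in>{(1, 4), (1, 5), (2, 4), (2, 5)}. box \<pi> ps ab = {}"
    and marked: "box \<pi> ps (2, 3) \<noteq> {}"
    unfolding marked_occ_def by simp_all
  obtain i0 i1 i2 i3 i4 where ps: "ps = [Suc i0, Suc i1, Suc i2, Suc i3, Suc i4]"
    and pos: "i0 < i1" "i1 < i2" "i2 < i3" "i3 < i4" "i4 < length \<pi>"
    and val: "\<pi> ! i4 < \<pi> ! i2" "\<pi> ! i2 < \<pi> ! i1" "\<pi> ! i1 < \<pi> ! i0" "\<pi> ! i0 < \<pi> ! i3"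
    using occ by (rule occ_43251_positions)
  have sorted: "sort (map (\<lambda>i. \<pi> ! (i - 1)) ps) = [\<pi> ! i4, \<pi> ! i2, \<pi> ! i1, \<pi> ! i0, \<pi> ! i3]"
    using val by (simp add: ps)
  have below: "\<pi> ! k < \<pi> ! i0" if "i0 < k" "k < i2" for k
  proof (cases "k = i1")
    case False
    define col where "col = (if k < i1 then 1 else 2 :: nat)"
    have "Suc k \<notin> box \<pi> ps (col, 4)" "Suc k \<notin> box \<pi> ps (col, 5)"
      using shaded by (auto simp: col_def)
    then have "\<not> (\<pi> ! i0 < \<pi> ! k \<and> \<pi> ! k < \<pi> ! i3)" "\<not> (\<pi> ! i3 < \<pi> ! k \<and> \<pi> ! k < length \<pi> + 1)"
      using that False unfolding box_def Let_def sorted by (auto simp: ps col_def nth_append split: if_splits)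
    moreover have "\<pi> ! k \<noteq> \<pi> ! i0" "\<pi> ! k \<noteq> \<pi> ! i3" "\<pi> ! k \<le> length \<pi>"
      using perm that pos False unfolding is_perm_def by (auto simp: nth_eq_iff_index_eq)
    ultimately show ?thesis by linarith
  qed (use val in simp)
  from marked obtain x where "x \<in> box \<pi> ps (2, 3)" by auto
  then have "Suc i1 < x" "x < Suc i2" "\<pi> ! i1 < \<pi> ! (x - 1)"
    unfolding box_def Let_def sorted by (simp_all add: ps)
  then have "i1 < x - 1" "x - 1 < i2" "\<pi> ! i1 < \<pi> ! (x - 1)" by simp_all
  with ps pos val below show ?thesis by (rule that)
qed

context
  fixes w :: "nat list" and i0 i1 i2 i3 i4 :: nat
  assumes dist: "distinct w"
    and pos: "i0 < i1" "i1 < i2" "i2 < i3" "i3 < i4" "i4 < length w"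
    and val: "w ! i4 < w ! i2" "w ! i2 < w ! i1" "w ! i1 < w ! i0" "w ! i0 < w ! i3"
    and below: "\<And>k. i0 < k \<Longrightarrow> k < i2 \<Longrightarrow> w ! k < w ! i0"
begin

lemma j3_stack_sort_order:
  assumes "i1 < k" "k < i2" "w ! i1 < w ! k"
  shows "subseq [w ! i1, w ! i2] (stack_sort w)" "subseq [w ! i2, w ! i0] (stack_sort w)"
    "subseq [w ! i0, w ! i4] (stack_sort w)"
proof -
  show "subseq [w ! i1, w ! i2] (stack_sort w)"
    using dist pos assms by (subst subseq_stack_sort_nth_iff) auto
  have "\<not> w ! i0 < w ! i2" "\<not> (\<exists>k. i0 < k \<and> k < i2 \<and> w ! i0 < w ! k)"
    using val below by (auto dest: less_asym)
  then have "\<not> subseq [w ! i0, w ! i2] (stack_sort w)"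
    using dist pos by (subst subseq_stack_sort_nth_iff) auto
  then show "subseq [w ! i2, w ! i0] (stack_sort w)"
    using dist pos by (subst subseq_pair_swap) (auto simp: nth_eq_iff_index_eq)
  have "\<exists>k. i0 < k \<and> k < i4 \<and> w ! i0 < w ! k" using pos val by (intro exI[of _ i3]) auto
  then show "subseq [w ! i0, w ! i4] (stack_sort w)"
    using dist pos by (subst subseq_stack_sort_nth_iff) auto
qed

lemma j3_stack_sort_gap:
  assumes "subseq [w ! i1, y] (stack_sort w)" "subseq [y, w ! i2] (stack_sort w)"
  shows "y \<le> w ! i0"
proof (rule ccontr)
  assume "\<not> y \<le> w ! i0"
  have "y \<in> set w" using assms(2) subseq_pair_set by fastforce
  then obtain t where t: "t < length w" "y = w ! t" by (auto simp: in_set_conv_nth)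
  with \<open>\<not> y \<le> w ! i0\<close> have large: "w ! i0 < w ! t" using t by simp
  have after_c: "subseq [w ! i1, w ! t] (stack_sort w)" and before_b: "subseq [w ! t, w ! i2] (stack_sort w)"
    using assms t by simp_all
  consider "t < i1" | "i1 \<le> t" "t < i2" | "t = i2" | "i2 < t" by linarith
  then show False
  proof cases
    case 1
    \<comment> \<open>y falls behind c but stays ahead of b: no larger entry between y and c, one between y and b.\<close>
    have "\<not> subseq [w ! t, w ! i1] (stack_sort w)"
      using after_c dist t pos 1
      by (subst subseq_pair_swap) (auto simp: nth_eq_iff_index_eq)
    then have small: "w ! k \<le> w ! t" if "t < k" "k < i1" for k
      using dist pos t 1 that by (subst (asm) subseq_stack_sort_nth_iff) auto
    from before_b obtain k where "t < k" "k < i2" "w ! t < w ! k"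
      using dist pos t 1 large val by (subst (asm) subseq_stack_sort_nth_iff) auto
    with small[of k] below[of k] large val pos(1) show False
      by (cases k i1 rule: linorder_cases) auto
  next
    case 2
    then show False using below[of t] large val pos(1) by (cases "t = i1") auto
  next
    case 3
    then show False using large val by simp
  next
    case 4
    have "subseq [w ! i2, w ! t] (stack_sort w)"
      using dist pos t 4 large val by (subst subseq_stack_sort_nth_iff) auto
    moreover have "w ! t \<noteq> w ! i2" using large val by auto
    ultimately show False
      using before_b dist t pos subseq_pair_swap[of "stack_sort w" "w ! i2" "w ! t"] by auto
  qed
qed

end

lemma mesh_occ_W2_if_subseqs:
  assumes dist: "distinct \<sigma>" and val: "a < b" "b < c" "c < d"
    and "subseq [c, b] \<sigma>" "subseq [b, d] \<sigma>" "subseq [d, a] \<sigma>"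
    and gap: "\<And>y. subseq [c, y] \<sigma> \<Longrightarrow> subseq [y, b] \<sigma> \<Longrightarrow> y \<le> d"
  shows "\<exists>qs. mesh_occ \<sigma> [3, 2, 4, 1] {(1, 4)} qs \<and> map (\<lambda>j. \<sigma> ! (j - 1)) qs = [c, b, d, a]"
proof -
  have "c \<in> set \<sigma>" "b \<in> set \<sigma>" "d \<in> set \<sigma>" "a \<in> set \<sigma>"
    using subseq_pair_set[OF assms(5)] subseq_pair_set[OF assms(7)] by simp_all
  then obtain qc qb qd qa where len: "qc < length \<sigma>" "qb < length \<sigma>" "qd < length \<sigma>" "qa < length \<sigma>"
    and at: "\<sigma> ! qc = c" "\<sigma> ! qb = b" "\<sigma> ! qd = d" "\<sigma> ! qa = a"
    by (metis in_set_conv_nth)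
  have q: "qc < qb" "qb < qd" "qd < qa"
    using assms(5-7) subseq_nth_nth_iff[OF dist] len by (simp_all flip: at)
  define qs where "qs = [Suc qc, Suc qb, Suc qd, Suc qa]"
  have entries: "map (\<lambda>j. \<sigma> ! (j - 1)) qs = [c, b, d, a]"
    unfolding qs_def using at by simp
  have "occ \<sigma> [3, 2, 4, 1] qs"
    unfolding occ_def qs_def using q len at val by (simp add: All_less_Suc)
  moreover have "box \<sigma> qs (1, 4) = {}"
  proof -
    have "sort (map (\<lambda>i. \<sigma> ! (i - 1)) qs) = [a, b, c, d]"
      unfolding qs_def using at val by simp
    then have "box \<sigma> qs (1, 4) = {x. Suc qc < x \<and> x < Suc qb \<and> d < \<sigma> ! (x - 1) \<and> \<sigma> ! (x - 1) < length \<sigma> + 1}"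
      unfolding box_def Let_def by (simp add: qs_def)
    also have "\<dots> = {}"
    proof -
      have "\<sigma> ! r \<le> d" if "qc < r" "r < qb" for r
      proof (rule gap)
        show "subseq [c, \<sigma> ! r] \<sigma>" "subseq [\<sigma> ! r, b] \<sigma>"
          using that len q by (simp_all flip: at add: subseq_nth_nth_iff[OF dist])
      qed
      moreover have "qc < x - 1" "x - 1 < qb" if "Suc qc < x" "x < Suc qb" for x
        using that by linarith+
      ultimately show ?thesis by (force dest: leD)
    qed
    finally show ?thesis .
  qed
  ultimately show ?thesis using entries unfolding mesh_occ_def by (intro exI[of _ qs]) simp
qed

theorem lemma3p6:
  fixes \<pi> :: "nat list" and ps :: "nat list"
  assumes "is_perm \<pi>"
    and "marked_occ \<pi> [4,3,2,5,1] {(1,4),(1,5),(2,4),(2,5)} {(2,3)} ps"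
  shows "\<exists>qs. mesh_occ (stack_sort \<pi>) [3,2,4,1] {(1,4)} qs \<and>
           map (\<lambda>j. stack_sort \<pi> ! (j - 1)) qs =
             [\<pi> ! (ps ! 1 - 1), \<pi> ! (ps ! 2 - 1), \<pi> ! (ps ! 0 - 1), \<pi> ! (ps ! 4 - 1)]"
proof -
  obtain i0 i1 i2 i3 i4 k where ps: "ps = [Suc i0, Suc i1, Suc i2, Suc i3, Suc i4]"
    and pos: "i0 < i1" "i1 < i2" "i2 < i3" "i3 < i4" "i4 < length \<pi>"
    and val: "\<pi> ! i4 < \<pi> ! i2" "\<pi> ! i2 < \<pi> ! i1" "\<pi> ! i1 < \<pi> ! i0" "\<pi> ! i0 < \<pi> ! i3"
    and below: "\<And>j. i0 < j \<Longrightarrow> j < i2 \<Longrightarrow> \<pi> ! j < \<pi> ! i0"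
    and above: "i1 < k" "k < i2" "\<pi> ! i1 < \<pi> ! k"
    by (rule j3_occurrence_positions[OF assms]) blast
  have dist: "distinct \<pi>" using assms(1) unfolding is_perm_def by simp
  note order = j3_stack_sort_order[OF dist pos val below above]
  have gap: "y \<le> \<pi> ! i0"
    if "subseq [\<pi> ! i1, y] (stack_sort \<pi>)" "subseq [y, \<pi> ! i2] (stack_sort \<pi>)" for y
    using j3_stack_sort_gap[OF dist pos val below that] .
  have "\<exists>qs. mesh_occ (stack_sort \<pi>) [3, 2, 4, 1] {(1, 4)} qs \<and>
      map (\<lambda>j. stack_sort \<pi> ! (j - 1)) qs = [\<pi> ! i1, \<pi> ! i2, \<pi> ! i0, \<pi> ! i4]"
    using dist val order gap by (intro mesh_occ_W2_if_subseqs) simp_all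
  then show ?thesis by (simp add: ps)
qed

end
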